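(* Let $n\ge5$, $x_1,\dots,x_{n-1}>0$, $\gamma,\delta>0$ with $\gamma\ne1\ne\delta$, $x_0=1$, and let $\mathbf{R}$ be the $n\times n$ matrix with entries $r_{ij}=x_{j-1}/x_{i-1}$ except $r_{12}=\delta x_1$, $r_{21}=1/(\delta x_1)$, $r_{34}=\gamma x_3/x_2$, $r_{43}=x_2/(\gamma x_3)$. Let $\mathbf{w}^{EM}$ be its principal right eigenvector. Then for $i=5,\dots,n$: $\delta>1$ iff $w_1^{EM}/w_i^{EM}>x_{i-1}$, and $\delta<1$ iff $w_1^{EM}/w_i^{EM}<x_{i-1}$.
   Context: The principal right eigenvector is the positive (Perron) eigenvector belonging to the largest eigenvalue. *)

theory Defs
  imports Main "HOL-Analysis.Analysis"
begin

text \<open>Matrices are n x n real matrices indexed by 1..n, as functions nat => nat => real.\<close>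

definition mat_mult_vec :: "nat \<Rightarrow> (nat \<Rightarrow> nat \<Rightarrow> real) \<Rightarrow> (nat \<Rightarrow> real) \<Rightarrow> nat \<Rightarrow> real" where
  "mat_mult_vec n A v i = (\<Sum>j = 1..n. A i j * v j)"

definition is_eigenvalue :: "nat \<Rightarrow> (nat \<Rightarrow> nat \<Rightarrow> real) \<Rightarrow> real \<Rightarrow> bool" where
  "is_eigenvalue n A mu \<longleftrightarrow>
     (\<exists>v. (\<exists>i\<in>{1..n}. v i \<noteq> 0) \<and> (\<forall>i\<in>{1..n}. mat_mult_vec n A v i = mu * v i))"

definition principal_right_eigenvector :: "nat \<Rightarrow> (nat \<Rightarrow> nat \<Rightarrow> real) \<Rightarrow> (nat \<Rightarrow> real) \<Rightarrow> bool" where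
  "principal_right_eigenvector n A w \<longleftrightarrow>
     (\<forall>i\<in>{1..n}. w i > 0) \<and>
     (\<exists>lam. (\<forall>i\<in>{1..n}. mat_mult_vec n A w i = lam * w i) \<and>
            (\<forall>mu. is_eigenvalue n A mu \<longrightarrow> mu \<le> lam))"

definition Rmat :: "(nat \<Rightarrow> real) \<Rightarrow> real \<Rightarrow> real \<Rightarrow> nat \<Rightarrow> nat \<Rightarrow> real" where
  "Rmat x \<gamma> \<delta> i j =
     (if i = 1 \<and> j = 2 then \<delta> * x 1
      else if i = 2 \<and> j = 1 then 1 / (\<delta> * x 1)
      else if i = 3 \<and> j = 4 then \<gamma> * x 3 / x 2
      else if i = 4 \<and> j = 3 then x 2 / (\<gamma> * x 3)
      else x (j - 1) / x (i - 1))"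

end

theory Submission
  imports Defs
begin

text \<open>Rows \<open>i \<ge> 5\<close> of \<open>R\<close> are those of the consistent matrix \<open>x\<^sub>j\<^sub>-\<^sub>1 / x\<^sub>i\<^sub>-\<^sub>1\<close>, and row 1
  differs from it only in the entry \<open>r\<^sub>1\<^sub>2\<close>. Subtracting the eigen-equations of rows \<open>i\<close> and 1
  gives \<open>\<lambda> (w\<^sub>1 - x\<^sub>i\<^sub>-\<^sub>1 w\<^sub>i) = (\<delta> - 1) x\<^sub>1 w\<^sub>2\<close>; as \<open>\<lambda>\<close>, \<open>x\<^sub>1\<close>, \<open>w\<^sub>2\<close> are positive, \<open>w\<^sub>1/w\<^sub>i - x\<^sub>i\<^sub>-\<^sub>1\<close>
  has the sign of \<open>\<delta> - 1\<close>.\<close>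

lemma Rmat_row_unperturbed:
  assumes "5 \<le> i"
  shows "mat_mult_vec n (Rmat x \<gamma> \<delta>) w i = (\<Sum>j = 1..n. x (j - 1) * w j) / x (i - 1)"
  unfolding mat_mult_vec_def sum_divide_distrib
  by (rule sum.cong) (use assms in \<open>auto simp: Rmat_def\<close>)

lemma Rmat_row_1:
  assumes "x 0 = 1" and "2 \<le> n"
  shows "mat_mult_vec n (Rmat x \<gamma> \<delta>) w 1
           = (\<Sum>j = 1..n. x (j - 1) * w j) + (\<delta> - 1) * x 1 * w 2"
proof -
  have "mat_mult_vec n (Rmat x \<gamma> \<delta>) w 1
          = (\<Sum>j = 1..n. x (j - 1) * w j + (if j = 2 then (\<delta> - 1) * x 1 * w 2 else 0))"
    unfolding mat_mult_vec_def
    by (rule sum.cong) (auto simp: Rmat_def assms(1) algebra_simps)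
  also have "\<dots> = (\<Sum>j = 1..n. x (j - 1) * w j) + (\<delta> - 1) * x 1 * w 2"
    unfolding sum.distrib using assms(2) by simp
  finally show ?thesis .
qed

lemma sgn_eq_if_mult_pos_eq:
  fixes d e :: "'a :: linordered_idom"
  assumes "0 < a" and "0 < b" and "a * d = e * b"
  shows "sgn d = sgn e"
  using arg_cong[OF assms(3), of sgn] assms(1,2) by (simp add: sgn_mult)

lemma Rmat_positive_eigenvector_ratio_sgn:
  fixes x w :: "nat \<Rightarrow> real"
  assumes "5 \<le> i" and "i \<le> n"
    and xpos: "\<forall>k\<in>{1..n-1}. x k > 0" and "x 0 = 1"
    and wpos: "\<forall>j\<in>{1..n}. w j > 0"
    and ev: "\<forall>j\<in>{1..n}. mat_mult_vec n (Rmat x \<gamma> \<delta>) w j = lam * w j"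
  shows "sgn (w 1 / w i - x (i - 1)) = sgn (\<delta> - 1)"
proof -
  have xpos': "x (j - 1) > 0" if "j \<in> {1..n}" for j
  proof (cases "j = 1")
    case False
    then have "j - 1 \<in> {1..n-1}" using that by auto
    then show ?thesis using xpos by blast
  qed (use \<open>x 0 = 1\<close> in simp)
  define T where "T = (\<Sum>j = 1..n. x (j - 1) * w j)"
  have "T > 0"
    unfolding T_def by (rule sum_pos) (use xpos' wpos assms(1,2) in auto)
  have row_i: "lam * w i * x (i - 1) = T"
  proof -
    have "T / x (i - 1) = lam * w i"
      using ev Rmat_row_unperturbed[of i n x \<gamma> \<delta> w] assms(1,2) by (simp add: T_def)
    then show ?thesis using xpos'[of i] assms(1,2) by (simp add: field_simps)
  qed
  have row_1: "lam * w 1 = T + (\<delta> - 1) * x 1 * w 2"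
    using ev Rmat_row_1[of x n \<gamma> \<delta> w] assms(1,2,4) by (simp add: T_def)
  have "0 < lam"
  proof -
    have "0 < w i * x (i - 1)" using wpos xpos'[of i] assms(1,2) by simp
    moreover have "0 < lam * (w i * x (i - 1))" using row_i \<open>T > 0\<close> by (simp add: mult.assoc)
    ultimately show ?thesis using zero_less_mult_pos2 by blast
  qed
  moreover have "0 < x 1 * w 2"
    using assms(1,2) xpos wpos by simp
  moreover have "lam * w i * (w 1 / w i - x (i - 1)) = (\<delta> - 1) * (x 1 * w 2)"
  proof -
    have "lam * w i * (w 1 / w i - x (i - 1)) = lam * w 1 - lam * w i * x (i - 1)"
      using wpos assms(1,2) by (simp add: right_diff_distrib less_imp_neq[symmetric])
    then show ?thesis using row_1 row_i by (simp add: algebra_simps)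
  qed
  ultimately show ?thesis
    using wpos assms(1,2) by (intro sgn_eq_if_mult_pos_eq[of "lam * w i" "x 1 * w 2"]) auto
qed

theorem mainTheorem17:
  fixes n :: nat and x :: "nat \<Rightarrow> real" and \<gamma> \<delta> :: real and w :: "nat \<Rightarrow> real"
  assumes "n \<ge> 5"
    and "\<forall>k\<in>{1..n-1}. x k > 0"
    and "x 0 = 1"
    and "\<gamma> > 0" and "\<delta> > 0" and "\<gamma> \<noteq> 1" and "\<delta> \<noteq> 1"
    and "principal_right_eigenvector n (Rmat x \<gamma> \<delta>) w"
  shows "\<forall>i\<in>{5..n}. (\<delta> > 1 \<longleftrightarrow> w 1 / w i > x (i - 1)) \<and> (\<delta> < 1 \<longleftrightarrow> w 1 / w i < x (i - 1))"
proof
  fix i assume "i \<in> {5..n}"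
  from assms(8) obtain lam where "\<forall>j\<in>{1..n}. w j > 0"
    and "\<forall>j\<in>{1..n}. mat_mult_vec n (Rmat x \<gamma> \<delta>) w j = lam * w j"
    unfolding principal_right_eigenvector_def by blast
  with \<open>i \<in> {5..n}\<close> assms(2,3)
  have "sgn (w 1 / w i - x (i - 1)) = sgn (\<delta> - 1)"
    by (intro Rmat_positive_eigenvector_ratio_sgn) auto
  then show "(\<delta> > 1 \<longleftrightarrow> w 1 / w i > x (i - 1)) \<and> (\<delta> < 1 \<longleftrightarrow> w 1 / w i < x (i - 1))"
    by (simp add: sgn_if split: if_splits)
qed

end
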